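(* There exist constants $c_1,c_2>0$ such that for all $n\ge1$, $c_1(3/4)^n\le 1-\mathcal{C}^*(n)\le c_2(3/4)^n$; that is, $1-\mathcal{C}^*(n)=\Theta\big((3/4)^n\big)$.
   Context: The concentratable entanglement of an $n$-qubit pure state is $\mathcal{C}(\ket{\psi})=1-\frac{1}{2^{n}}\sum_{\alpha\subseteq [n]}\mathrm{Tr}[\rho_\alpha^2]$ ($\rho_\alpha$ the reduced state on $\alpha$, $\mathrm{Tr}[\rho_\emptyset^2]=1$), and $\mathcal{C}^*(n)=\max_{\ket{\psi}}\mathcal{C}(\ket{\psi})$ over $n$-qubit pure states. *)

theory Defs
  imports Complex_Main
begin

text \<open>An n-qubit pure state is given by its amplitudes in the computational basis.
  A basis vector |x_0 ... x_{n-1}> is encoded by the set of positions i < n with x_i = 1,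
  i.e. by a subset of {..<n}. Only values on Pow {..<n} are relevant.\<close>

definition qstate :: "nat \<Rightarrow> (nat set \<Rightarrow> complex) \<Rightarrow> bool" where
  "qstate n \<psi> \<longleftrightarrow> (\<Sum>x\<in>Pow {..<n}. (cmod (\<psi> x))^2) = 1"

text \<open>Reduced density matrix on the qubits in alpha (subset of {..<n}):
  entry (a, a') for a, a' subsets of alpha, obtained by tracing out the complement.\<close>

definition rdm :: "nat \<Rightarrow> (nat set \<Rightarrow> complex) \<Rightarrow> nat set \<Rightarrow> nat set \<Rightarrow> nat set \<Rightarrow> complex" where
  "rdm n \<psi> \<alpha> a a' = (\<Sum>b\<in>Pow ({..<n} - \<alpha>). \<psi> (a \<union> b) * cnj (\<psi> (a' \<union> b)))"

text \<open>Purity Tr[rho_alpha^2] (real, since rho_alpha is Hermitian).\<close>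

definition purity :: "nat \<Rightarrow> (nat set \<Rightarrow> complex) \<Rightarrow> nat set \<Rightarrow> real" where
  "purity n \<psi> \<alpha> = Re (\<Sum>a\<in>Pow \<alpha>. \<Sum>a'\<in>Pow \<alpha>. rdm n \<psi> \<alpha> a a' * rdm n \<psi> \<alpha> a' a)"

definition conc_ent :: "nat \<Rightarrow> (nat set \<Rightarrow> complex) \<Rightarrow> real" where
  "conc_ent n \<psi> = 1 - (1 / 2 ^ n) * (\<Sum>\<alpha>\<in>Pow {..<n}. purity n \<psi> \<alpha>)"

definition conc_ent_max :: "nat \<Rightarrow> real" where
  "conc_ent_max n = (SUP \<psi>\<in>{\<psi>. qstate n \<psi>}. conc_ent n \<psi>)"

end

theory Submission
  imports Defs "HOL-Analysis.Convex"
begin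

text \<open>
  For every state, dropping the off-diagonal entries of \<open>\<rho>\<^sub>\<alpha>\<close> leaves the squared
  diagonal, a probability vector on \<open>2 ^ |\<alpha>|\<close> points; hence \<open>Tr \<rho>\<^sub>\<alpha>\<^sup>2 \<ge> 2 ^ -|\<alpha>|\<close>, and
  summing over \<open>\<alpha>\<close> by the binomial theorem gives \<open>\<Sum>\<^sub>\<alpha> Tr \<rho>\<^sub>\<alpha>\<^sup>2 \<ge> (3/2)^n\<close>, that is
  \<open>1 - \<C>\<^sup>* \<ge> (3/4)^n\<close>.
  Conversely, average \<open>Tr \<rho>\<^sub>\<alpha>\<^sup>2\<close> over the states \<open>2 ^ (-n/2) s\<close> with \<open>s\<close> ranging over all
  sign patterns: written as a fourfold sum of products \<open>s(a\<union>b) s(a'\<union>b) s(a\<union>b') s(a'\<union>b')\<close>,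
  only the terms with \<open>a = a'\<close> or \<open>b = b'\<close> survive, so the average is at most
  \<open>2 ^ -|\<alpha>| + 2 ^ -(n - |\<alpha>|)\<close>. Summing over \<open>\<alpha>\<close>, some sign pattern has
  \<open>\<Sum>\<^sub>\<alpha> Tr \<rho>\<^sub>\<alpha>\<^sup>2 \<le> 2 (3/2)^n\<close>, that is \<open>1 - \<C>\<^sup>* \<le> 2 (3/4)^n\<close>.
\<close>

lemma sum_Pow_power_card:
  fixes x y :: "'a :: comm_semiring_1"
  assumes "finite A"
  shows "(\<Sum>B\<in>Pow A. x ^ card B * y ^ (card A - card B)) = (x + y) ^ card A"
proof -
  have "(x + y) ^ card A = (\<Sum>B\<in>Pow A. (\<Prod>i\<in>B. x) * (\<Prod>i\<in>A - B. y))"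
    using prod_add[OF assms, of "\<lambda>_. x" "\<lambda>_. y"] by simp
  also have "\<dots> = (\<Sum>B\<in>Pow A. x ^ card B * y ^ (card A - card B))"
    using assms by (intro sum.cong) (auto simp: card_Diff_subset finite_subset)
  finally show ?thesis ..
qed

lemma sum_Pow_Un_Diff:
  assumes "\<alpha> \<subseteq> U"
  shows "(\<Sum>a\<in>Pow \<alpha>. \<Sum>b\<in>Pow (U - \<alpha>). g (a \<union> b)) = (\<Sum>x\<in>Pow U. g x)"
proof -
  have "bij_betw (\<lambda>(a, b). a \<union> b) (Pow \<alpha> \<times> Pow (U - \<alpha>)) (Pow U)"
    by (rule bij_betw_byWitness[where f' = "\<lambda>x. (x \<inter> \<alpha>, x - \<alpha>)"]) (use assms in auto)
  then have "(\<Sum>p\<in>Pow \<alpha> \<times> Pow (U - \<alpha>). g ((\<lambda>(a, b). a \<union> b) p)) = (\<Sum>x\<in>Pow U. g x)"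
    by (rule sum.reindex_bij_betw)
  then show ?thesis
    by (simp add: sum.cartesian_product split_def)
qed

lemma rdm_swap: "rdm n \<psi> \<alpha> a' a = cnj (rdm n \<psi> \<alpha> a a')"
  unfolding rdm_def by (simp add: mult.commute)

lemma rdm_diag:
  "rdm n \<psi> \<alpha> a a = of_real (\<Sum>b\<in>Pow ({..<n} - \<alpha>). (cmod (\<psi> (a \<union> b)))\<^sup>2)"
  unfolding rdm_def of_real_sum complex_norm_square ..

lemma purity_eq_sum_norm_rdm:
  "purity n \<psi> \<alpha> = (\<Sum>a\<in>Pow \<alpha>. \<Sum>a'\<in>Pow \<alpha>. (cmod (rdm n \<psi> \<alpha> a a'))\<^sup>2)"
proof -
  have "rdm n \<psi> \<alpha> a a' * rdm n \<psi> \<alpha> a' a = of_real ((cmod (rdm n \<psi> \<alpha> a a'))\<^sup>2)" for a a'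
    unfolding rdm_swap[of n \<psi> \<alpha> a' a] complex_norm_square ..
  then show ?thesis
    unfolding purity_def by simp
qed

lemma purity_scale:
  "purity n (\<lambda>x. c * \<psi> x) \<alpha> = cmod c ^ 4 * purity n \<psi> \<alpha>"
proof -
  have "c * z * cnj (c * w) = (c * cnj c) * (z * cnj w)" for z w
    by (simp add: mult_ac)
  then have "rdm n (\<lambda>x. c * \<psi> x) \<alpha> a a' = of_real ((cmod c)\<^sup>2) * rdm n \<psi> \<alpha> a a'" for a a'
    unfolding rdm_def by (simp only: complex_norm_square sum_distrib_left)
  moreover have "of_real ((cmod c)\<^sup>2) * z * (of_real ((cmod c)\<^sup>2) * w) = of_real (cmod c ^ 4) * (z * w)"
    for z w :: complex
    by (simp add: mult_ac flip: power_add)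
  ultimately show ?thesis
    unfolding purity_def by (simp only: flip: sum_distrib_left) simp
qed

lemma purity_ge_inverse_power:
  assumes "qstate n \<psi>" and "\<alpha> \<subseteq> {..<n}"
  shows "1 / 2 ^ card \<alpha> \<le> purity n \<psi> \<alpha>"
proof -
  define d where "d a = (\<Sum>b\<in>Pow ({..<n} - \<alpha>). (cmod (\<psi> (a \<union> b)))\<^sup>2)" for a
  have fin: "finite \<alpha>"
    using assms(2) finite_subset by blast
  have "(\<Sum>a\<in>Pow \<alpha>. d a) = 1"
    using sum_Pow_Un_Diff[OF assms(2), of "\<lambda>x. (cmod (\<psi> x))\<^sup>2"] assms(1) unfolding qstate_def d_def by simp
  then have "1 / 2 ^ card \<alpha> \<le> (\<Sum>a\<in>Pow \<alpha>. (d a)\<^sup>2)"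
    using sum_squared_le_sum_of_squares[of d "Pow \<alpha>"] fin by (simp add: card_Pow divide_le_eq)
  also have "\<dots> \<le> purity n \<psi> \<alpha>"
    unfolding purity_eq_sum_norm_rdm
  proof (rule sum_mono)
    fix a assume "a \<in> Pow \<alpha>"
    then have "(cmod (rdm n \<psi> \<alpha> a a))\<^sup>2 \<le> (\<Sum>a'\<in>Pow \<alpha>. (cmod (rdm n \<psi> \<alpha> a a'))\<^sup>2)"
      using fin by (intro member_le_sum) auto
    moreover have "cmod (rdm n \<psi> \<alpha> a a) = d a"
      unfolding rdm_diag d_def norm_of_real by (simp add: sum_nonneg)
    ultimately show "(d a)\<^sup>2 \<le> (\<Sum>a'\<in>Pow \<alpha>. (cmod (rdm n \<psi> \<alpha> a a'))\<^sup>2)"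
      by simp
  qed
  finally show ?thesis .
qed

lemma sum_purity_ge:
  assumes "qstate n \<psi>"
  shows "(3/2) ^ n \<le> (\<Sum>\<alpha>\<in>Pow {..<n}. purity n \<psi> \<alpha>)"
proof -
  have "(3/2 :: real) ^ n = (\<Sum>\<alpha>\<in>Pow {..<n}. (1/2) ^ card \<alpha> * 1 ^ (n - card \<alpha>))"
    using sum_Pow_power_card[of "{..<n}" "1/2 :: real" 1] by simp
  also have "\<dots> \<le> (\<Sum>\<alpha>\<in>Pow {..<n}. purity n \<psi> \<alpha>)"
    using purity_ge_inverse_power[OF assms] by (intro sum_mono) (simp add: power_one_over)
  finally show ?thesis .
qed

lemma purity_of_real:
  "purity n (\<lambda>x. of_real (f x)) \<alpha> =
    (\<Sum>a\<in>Pow \<alpha>. \<Sum>a'\<in>Pow \<alpha>. \<Sum>b\<in>Pow ({..<n} - \<alpha>). \<Sum>b'\<in>Pow ({..<n} - \<alpha>).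
      f (a \<union> b) * f (a' \<union> b) * f (a \<union> b') * f (a' \<union> b'))"
proof -
  define R where "R a a' = (\<Sum>b\<in>Pow ({..<n} - \<alpha>). f (a \<union> b) * f (a' \<union> b))" for a a'
  have "rdm n (\<lambda>x. of_real (f x)) \<alpha> a a' = of_real (R a a')" for a a'
    unfolding rdm_def R_def by simp
  moreover have "R a' a = R a a'" for a a'
    unfolding R_def by (simp add: mult.commute)
  ultimately have "purity n (\<lambda>x. of_real (f x)) \<alpha> = (\<Sum>a\<in>Pow \<alpha>. \<Sum>a'\<in>Pow \<alpha>. R a a' * R a a')"
    unfolding purity_def by simp
  then show ?thesis
    unfolding R_def sum_product by (simp add: mult_ac)
qed

definition sign_vectors :: "'a set \<Rightarrow> ('a \<Rightarrow> real) set" where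
  "sign_vectors D = D \<rightarrow>\<^sub>E {-1, 1}"

lemma finite_sign_vectors: "finite D \<Longrightarrow> finite (sign_vectors D)"
  unfolding sign_vectors_def by (intro finite_PiE) auto

lemma sign_vectors_nonempty: "sign_vectors D \<noteq> {}"
  unfolding sign_vectors_def by (simp add: PiE_eq_empty_iff)

lemma abs_sign_vector: "s \<in> sign_vectors D \<Longrightarrow> x \<in> D \<Longrightarrow> \<bar>s x\<bar> = 1"
  unfolding sign_vectors_def by (auto simp: PiE_iff)

lemma sum_sign_vectors_prod4_eq_0:
  assumes "p \<in> D" "q \<noteq> p" "r \<noteq> p" "t \<noteq> p"
  shows "(\<Sum>s\<in>sign_vectors D. s p * s q * s r * s t) = 0"
proof -
  define F where "F s = s p * s q * s r * s t" for s :: "'a \<Rightarrow> real"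
  define neg_p where "neg_p s = s(p := - s p)" for s :: "'a \<Rightarrow> real"
  have "bij_betw neg_p (sign_vectors D) (sign_vectors D)"
    by (rule bij_betw_byWitness[where f' = neg_p])
      (use assms(1) in \<open>fastforce simp: neg_p_def sign_vectors_def PiE_iff extensional_def\<close>)+
  then have "(\<Sum>s\<in>sign_vectors D. F (neg_p s)) = (\<Sum>s\<in>sign_vectors D. F s)"
    by (rule sum.reindex_bij_betw)
  moreover have "F (neg_p s) = - F s" for s
    unfolding F_def neg_p_def using assms(2-4) by simp
  ultimately show ?thesis
    unfolding F_def by (simp add: sum_negf)
qed

lemma sum_sign_vectors_prod4_le_card:
  assumes "p \<in> D" "q \<in> D" "r \<in> D" "t \<in> D"
  shows "(\<Sum>s\<in>sign_vectors D. s p * s q * s r * s t) \<le> card (sign_vectors D)"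
proof -
  have "s p * s q * s r * s t \<le> 1" if "s \<in> sign_vectors D" for s
  proof -
    have "\<bar>s p * s q * s r * s t\<bar> = 1"
      using that assms by (simp add: abs_mult abs_sign_vector)
    then show ?thesis
      by linarith
  qed
  then show ?thesis
    using sum_bounded_above[of "sign_vectors D" "\<lambda>s. s p * s q * s r * s t" 1] by simp
qed

lemma sum_sign_vectors_purity_term_le:
  assumes "\<alpha> \<subseteq> U" "a \<subseteq> \<alpha>" "a' \<subseteq> \<alpha>" "b \<subseteq> U - \<alpha>" "b' \<subseteq> U - \<alpha>"
  shows "(\<Sum>s\<in>sign_vectors (Pow U). s (a \<union> b) * s (a' \<union> b) * s (a \<union> b') * s (a' \<union> b'))
    \<le> real (card (sign_vectors (Pow U))) * (of_bool (a = a') + of_bool (b = b'))"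
proof (cases "a = a' \<or> b = b'")
  case True
  have "a \<union> b \<in> Pow U" "a' \<union> b \<in> Pow U" "a \<union> b' \<in> Pow U" "a' \<union> b' \<in> Pow U"
    using assms by auto
  then have "(\<Sum>s\<in>sign_vectors (Pow U). s (a \<union> b) * s (a' \<union> b) * s (a \<union> b') * s (a' \<union> b'))
      \<le> real (card (sign_vectors (Pow U))) * 1"
    by (simp add: sum_sign_vectors_prod4_le_card)
  also have "\<dots> \<le> real (card (sign_vectors (Pow U))) * (of_bool (a = a') + of_bool (b = b'))"
    using True by (intro mult_left_mono) auto
  finally show ?thesis .
next
  case False
  have "a \<union> b \<in> Pow U"
    using assms by auto
  \<comment> \<open>\<open>a \<union> b\<close> determines \<open>a\<close> and \<open>b\<close>, as \<open>a \<subseteq> \<alpha>\<close> and \<open>b \<inter> \<alpha> = {}\<close>\<close>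
  moreover have "a' \<union> b \<noteq> a \<union> b" "a \<union> b' \<noteq> a \<union> b" "a' \<union> b' \<noteq> a \<union> b"
    using assms False by blast+
  ultimately show ?thesis
    using False by (simp add: sum_sign_vectors_prod4_eq_0)
qed

lemma sum_sign_vectors_purity_le:
  assumes "\<alpha> \<subseteq> {..<n}"
  shows "(\<Sum>s\<in>sign_vectors (Pow {..<n}). purity n (\<lambda>x. of_real (s x)) \<alpha>)
    \<le> real (card (sign_vectors (Pow {..<n}))) * (2 ^ card \<alpha> * 4 ^ (n - card \<alpha>) + 4 ^ card \<alpha> * 2 ^ (n - card \<alpha>))"
proof -
  define S where "S = sign_vectors (Pow {..<n})"
  define B where "B = {..<n} - \<alpha>"
  have fin: "finite \<alpha>" "finite B"
    using assms finite_subset by (auto simp: B_def)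
  then have card_B: "card B = n - card \<alpha>"
    using assms by (simp add: B_def card_Diff_subset)
  have "(\<Sum>s\<in>S. purity n (\<lambda>x. of_real (s x)) \<alpha>) =
    (\<Sum>a\<in>Pow \<alpha>. \<Sum>a'\<in>Pow \<alpha>. \<Sum>b\<in>Pow B. \<Sum>b'\<in>Pow B.
      \<Sum>s\<in>S. s (a \<union> b) * s (a' \<union> b) * s (a \<union> b') * s (a' \<union> b'))"
    unfolding purity_of_real B_def by (simp only: sum.swap[of _ S])
  also have "\<dots> \<le> (\<Sum>a\<in>Pow \<alpha>. \<Sum>a'\<in>Pow \<alpha>. \<Sum>b\<in>Pow B. \<Sum>b'\<in>Pow B.
      real (card S) * (of_bool (a = a') + of_bool (b = b')))"
    unfolding S_def B_def using assms by (intro sum_mono sum_sign_vectors_purity_term_le) auto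
  also have "\<dots> = real (card S) * (\<Sum>a\<in>Pow \<alpha>. \<Sum>a'\<in>Pow \<alpha>. \<Sum>b\<in>Pow B. \<Sum>b'\<in>Pow B. of_bool (a = a'))
      + real (card S) * (\<Sum>a\<in>Pow \<alpha>. \<Sum>a'\<in>Pow \<alpha>. \<Sum>b\<in>Pow B. \<Sum>b'\<in>Pow B. of_bool (b = b'))"
    by (simp only: distrib_left sum.distrib sum_distrib_left)
  also have "\<dots> = real (card S) * (2 ^ card \<alpha> * 4 ^ card B + 4 ^ card \<alpha> * 2 ^ card B)"
    using fin by (simp add: card_Pow distrib_left mult.assoc[symmetric] flip: power_mult_distrib sum_distrib_right)
  finally show ?thesis
    unfolding S_def card_B .
qed

lemma ex_le_of_sum_le_card_mult:
  fixes f :: "'a \<Rightarrow> real" and c :: real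
  assumes "finite S" "S \<noteq> {}" "(\<Sum>s\<in>S. f s) \<le> card S * c"
  shows "\<exists>s\<in>S. f s \<le> c"
proof (rule ccontr)
  assume "\<not> (\<exists>s\<in>S. f s \<le> c)"
  then have "(\<Sum>s\<in>S. c) < (\<Sum>s\<in>S. f s)"
    using assms(1,2) by (intro sum_strict_mono) auto
  with assms(3) show False
    by simp
qed

lemma ex_qstate_sum_purity_le:
  "\<exists>\<psi>. qstate n \<psi> \<and> (\<Sum>\<alpha>\<in>Pow {..<n}. purity n \<psi> \<alpha>) \<le> 2 * (3/2) ^ n"
proof -
  define S where "S = sign_vectors (Pow {..<n})"
  have "(\<Sum>s\<in>S. \<Sum>\<alpha>\<in>Pow {..<n}. purity n (\<lambda>x. of_real (s x)) \<alpha>)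
      \<le> (\<Sum>\<alpha>\<in>Pow {..<n}. real (card S) *
            (2 ^ card \<alpha> * 4 ^ (n - card \<alpha>) + 4 ^ card \<alpha> * 2 ^ (n - card \<alpha>)))"
    unfolding S_def by (subst sum.swap) (intro sum_mono sum_sign_vectors_purity_le; simp)
  also have "\<dots> = real (card S) * (2 * 6 ^ n)"
    using sum_Pow_power_card[of "{..<n}" "2::real" 4] sum_Pow_power_card[of "{..<n}" "4::real" 2]
    by (simp add: sum.distrib flip: sum_distrib_left)
  finally have "\<exists>s\<in>S. (\<Sum>\<alpha>\<in>Pow {..<n}. purity n (\<lambda>x. of_real (s x)) \<alpha>) \<le> 2 * 6 ^ n"
    by (rule ex_le_of_sum_le_card_mult[rotated 2]) (simp_all add: S_def finite_sign_vectors sign_vectors_nonempty)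
  then obtain s where "s \<in> S"
    and s: "(\<Sum>\<alpha>\<in>Pow {..<n}. purity n (\<lambda>x. of_real (s x)) \<alpha>) \<le> 2 * 6 ^ n"
    by blast
  define c :: complex where "c = of_real (1 / sqrt (2 ^ n))"
  define \<psi> where "\<psi> x = c * of_real (s x)" for x
  have c2: "cmod c ^ 2 = 1 / 2 ^ n"
    by (simp add: c_def norm_divide power_divide)
  have "(\<Sum>x\<in>Pow {..<n}. (cmod (\<psi> x))\<^sup>2) = (\<Sum>x\<in>Pow {..<n}. cmod c ^ 2)"
    using \<open>s \<in> S\<close> by (intro sum.cong) (auto simp: \<psi>_def S_def norm_mult abs_sign_vector)
  then have "qstate n \<psi>"
    unfolding qstate_def c2 by (simp add: card_Pow)
  have "(\<Sum>\<alpha>\<in>Pow {..<n}. purity n \<psi> \<alpha>)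
      = (cmod c ^ 2)\<^sup>2 * (\<Sum>\<alpha>\<in>Pow {..<n}. purity n (\<lambda>x. of_real (s x)) \<alpha>)"
    unfolding \<psi>_def purity_scale by (simp add: sum_distrib_left)
  also have "\<dots> \<le> (cmod c ^ 2)\<^sup>2 * (2 * 6 ^ n)"
    by (rule mult_left_mono[OF s]) simp
  also have "\<dots> = 2 * (3/2) ^ n"
    unfolding c2 by (simp add: field_simps power2_eq_square flip: power_mult_distrib)
  finally show ?thesis
    using \<open>qstate n \<psi>\<close> by blast
qed

lemma conc_ent_le:
  assumes "qstate n \<psi>"
  shows "conc_ent n \<psi> \<le> 1 - (3/4) ^ n"
proof -
  have "(3/4 :: real) ^ n = (3/2) ^ n / 2 ^ n"
    by (simp add: field_simps flip: power_mult_distrib)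
  then show ?thesis
    using sum_purity_ge[OF assms] unfolding conc_ent_def by (simp add: divide_right_mono)
qed

lemma conc_ent_max_le: "conc_ent_max n \<le> 1 - (3/4) ^ n"
proof -
  have "{\<psi>. qstate n \<psi>} \<noteq> {}"
    using ex_qstate_sum_purity_le by blast
  then show ?thesis
    unfolding conc_ent_max_def by (rule cSUP_least) (simp add: conc_ent_le)
qed

lemma conc_ent_max_ge: "1 - 2 * (3/4) ^ n \<le> conc_ent_max n"
proof -
  obtain \<psi> where "qstate n \<psi>" and \<psi>: "(\<Sum>\<alpha>\<in>Pow {..<n}. purity n \<psi> \<alpha>) \<le> 2 * (3/2) ^ n"
    using ex_qstate_sum_purity_le by blast
  have "1 - 2 * (3/4) ^ n \<le> conc_ent n \<psi>"
  proof -
    have "(3/4 :: real) ^ n = (3/2) ^ n / 2 ^ n"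
      by (simp add: field_simps flip: power_mult_distrib)
    then show ?thesis
      using \<psi> unfolding conc_ent_def by (simp add: divide_right_mono)
  qed
  also have "\<dots> \<le> conc_ent_max n"
    unfolding conc_ent_max_def
    by (rule cSUP_upper) (use \<open>qstate n \<psi>\<close> conc_ent_le in \<open>auto intro: bdd_aboveI2[where M = "1 - (3/4) ^ n"]\<close>)
  finally show ?thesis .
qed

theorem mainTheorem12:
  shows "\<exists>c1 c2 :: real. c1 > 0 \<and> c2 > 0 \<and>
    (\<forall>n::nat. n \<ge> 1 \<longrightarrow>
       c1 * (3/4) ^ n \<le> 1 - conc_ent_max n \<and> 1 - conc_ent_max n \<le> c2 * (3/4) ^ n)"
  using conc_ent_max_le conc_ent_max_ge
  by (intro exI[of _ 1] exI[of _ 2]) (auto simp: algebra_simps)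

end
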